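(* For all $c>0$ and $t>0$, $$\log\Big(1+2c\sinh\frac{t}{2}\Big)\le \frac12\,\frac{t^2+(2c+1)t}{t+1}.$$ *)

theory Defs
  imports Complex_Main
begin

end

theory Submission
  imports Defs
begin

text \<open>
  Write \<open>a = 2 sinh (t/2)\<close> and \<open>u = t/(t+1)\<close>, so that the right-hand side is \<open>t/2 + c u\<close>.
  Bounding \<open>ln\<close> by its tangent at \<open>w = a/u\<close> gives \<open>ln (1 + c a) \<le> ln w + 1/w - 1 + c u\<close>
  for every \<open>c\<close>, so it suffices to show \<open>ln w \<le> t/2 + 1 - 1/w\<close>. With \<open>q = exp (-t/2)\<close>
  and \<open>r = q w = (t+1)(1-q\<^sup>2)/t\<close> this follows from \<open>(r - 1)\<^sup>2 \<le> 1 - q\<close>, which in turn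
  follows from \<open>t \<ge> 2 (1 - q)\<close>, \<open>(1 + t) q\<^sup>2 \<le> 1\<close> and the polynomial inequality
  \<open>(1 - q) (1 + 2q)\<^sup>2 \<le> 4\<close> on \<open>[0, 1]\<close>.
\<close>

lemma ln_le_tangent:
  fixes x w :: real
  assumes "x > 0" and "w > 0"
  shows "ln x \<le> ln w + x / w - 1"
proof -
  have "ln (x / w) \<le> x / w - 1"
    using assms by (intro ln_le_minus_one) simp
  moreover have "ln (x / w) = ln x - ln w"
    using assms by (simp add: ln_div)
  ultimately show ?thesis by simp
qed

lemma ln_one_plus_le_affine:
  fixes a u c s :: real
  assumes "a > 0" and "u > 0" and "c \<ge> 0"
    and "ln (a / u) \<le> s + 1 - u / a"
  shows "ln (1 + c * a) \<le> s + c * u"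
proof -
  have "ln (1 + c * a) \<le> ln (a / u) + (1 + c * a) / (a / u) - 1"
    using assms by (intro ln_le_tangent) (auto intro: add_pos_nonneg)
  also have "(1 + c * a) / (a / u) = u / a + c * u"
    using assms by (simp add: field_simps)
  finally show ?thesis
    using assms(4) by simp
qed

lemma ln_le_one_minus_div:
  fixes r q :: real
  assumes "r > 0" and "(r - 1)\<^sup>2 \<le> 1 - q"
  shows "ln r \<le> 1 - q / r"
proof -
  have "r * (r - 1) \<le> r * (1 - q / r)"
    using assms by (simp add: power2_eq_square algebra_simps)
  then have "r - 1 \<le> 1 - q / r"
    using \<open>r > 0\<close> by simp
  with ln_le_minus_one[OF \<open>r > 0\<close>] show ?thesis by simp
qed

lemma one_minus_mul_one_plus_double_sq_le_four:
  fixes q :: real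
  assumes "0 \<le> q" and "q \<le> 1"
  shows "(1 - q) * (1 + 2 * q)\<^sup>2 \<le> 4"
proof -
  have "4 - (1 - q) * (1 + 2 * q)\<^sup>2 = 3 * (1 - q) + 4 * q ^ 3"
    by (simp add: power2_eq_square power3_eq_cube algebra_simps)
  also have "\<dots> \<ge> 0"
    using assms by simp
  finally show ?thesis by simp
qed

lemma sq_ratio_minus_one_le:
  fixes q t :: real
  assumes "0 \<le> q" and "q \<le> 1" and "0 < t"
    and t_ge: "2 * (1 - q) \<le> t" and "(1 + t) * q\<^sup>2 \<le> 1"
  shows "((1 + t) * (1 - q\<^sup>2) / t - 1)\<^sup>2 \<le> 1 - q"
proof -
  define n where "n = 1 - (1 + t) * q\<^sup>2"
  have "n \<ge> 0"
    using assms(5) by (simp add: n_def)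
  have "n \<le> 1 - (1 + 2 * (1 - q)) * q\<^sup>2"
    unfolding n_def using t_ge by (intro diff_left_mono mult_right_mono) auto
  also have "\<dots> = (1 - q)\<^sup>2 * (1 + 2 * q)"
    by (simp add: power2_eq_square algebra_simps)
  finally have "n\<^sup>2 \<le> ((1 - q)\<^sup>2 * (1 + 2 * q))\<^sup>2"
    using \<open>n \<ge> 0\<close> by (intro power_mono) auto
  also have "\<dots> = (1 - q) ^ 3 * ((1 - q) * (1 + 2 * q)\<^sup>2)"
    by (simp add: power2_eq_square power3_eq_cube algebra_simps)
  also have "\<dots> \<le> (1 - q) ^ 3 * 4"
    using assms(1,2) by (intro mult_left_mono one_minus_mul_one_plus_double_sq_le_four) auto
  also have "\<dots> = (1 - q) * (2 * (1 - q))\<^sup>2"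
    by (simp add: power2_eq_square power3_eq_cube algebra_simps)
  also have "\<dots> \<le> (1 - q) * t\<^sup>2"
    using assms by (intro mult_left_mono power_mono) auto
  finally have "n\<^sup>2 \<le> (1 - q) * t\<^sup>2" .
  moreover have "(1 + t) * (1 - q\<^sup>2) / t - 1 = n / t"
    using \<open>0 < t\<close> by (simp add: n_def field_simps)
  ultimately show ?thesis
    using \<open>0 < t\<close> by (simp add: power_divide pos_divide_le_eq)
qed

lemma ln_sinh_ratio_le:
  fixes t :: real
  assumes "t > 0"
  defines "w \<equiv> 2 * sinh (t / 2) * (t + 1) / t"
  shows "ln w \<le> t / 2 + 1 - 1 / w"
proof -
  define q where "q = exp (- (t / 2))"
  define r where "r = (1 + t) * (1 - q\<^sup>2) / t"
  have "0 < q" "q < 1"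
    using assms by (simp_all add: q_def)
  have "q\<^sup>2 = exp (- t)"
    by (simp add: q_def power2_eq_square flip: exp_add)
  moreover have "(1 + t) * exp (- t) \<le> exp t * exp (- t)"
    by (intro mult_right_mono exp_ge_add_one_self) simp
  ultimately have "(1 + t) * q\<^sup>2 \<le> 1"
    by (simp add: exp_minus_inverse)
  moreover have "2 * (1 - q) \<le> t"
    using exp_ge_add_one_self[of "- (t / 2)"] by (simp add: q_def)
  ultimately have "(r - 1)\<^sup>2 \<le> 1 - q"
    unfolding r_def using \<open>0 < q\<close> \<open>q < 1\<close> assms(1) by (intro sq_ratio_minus_one_le) auto
  have "r > 0"
    using \<open>0 < q\<close> \<open>q < 1\<close> assms(1) by (simp add: r_def power_less_one_iff)
  then have "ln r \<le> 1 - q / r"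
    using \<open>(r - 1)\<^sup>2 \<le> 1 - q\<close> by (rule ln_le_one_minus_div)
  moreover have "w = r / q"
    using \<open>0 < q\<close> assms(1)
    by (simp add: w_def r_def q_def sinh_def exp_minus power2_eq_square field_simps)
  moreover have "ln (r / q) = ln r + t / 2"
    using \<open>0 < q\<close> \<open>r > 0\<close> by (simp add: ln_div q_def)
  ultimately show ?thesis
    by simp
qed

theorem lemma3p6:
  fixes c t :: real
  assumes "c > 0" and "t > 0"
  shows "ln (1 + 2 * c * sinh (t / 2)) \<le> (1/2) * ((t^2 + (2*c + 1) * t) / (t + 1))"
proof -
  define a where "a = 2 * sinh (t / 2)"
  define u where "u = t / (t + 1)"
  have "a > 0" "u > 0"
    using assms by (simp_all add: a_def u_def)
  have "a / u = 2 * sinh (t / 2) * (t + 1) / t"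
    by (simp add: a_def u_def)
  then have "ln (a / u) \<le> t / 2 + 1 - 1 / (a / u)"
    using ln_sinh_ratio_le[OF \<open>t > 0\<close>] by simp
  then have "ln (a / u) \<le> t / 2 + 1 - u / a"
    by simp
  then have "ln (1 + c * a) \<le> t / 2 + c * u"
    using \<open>a > 0\<close> \<open>u > 0\<close> \<open>c > 0\<close> by (intro ln_one_plus_le_affine) auto
  moreover have "(1/2) * ((t^2 + (2*c + 1) * t) / (t + 1)) = t / 2 + c * u"
    using assms by (simp add: u_def field_simps power2_eq_square)
  moreover have "1 + 2 * c * sinh (t / 2) = 1 + c * a"
    by (simp add: a_def)
  ultimately show ?thesis
    by (simp only:)
qed

end
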